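(* For a shift space $X\subseteq\mathscr{A}^\infty$ over a finite alphabet $\mathscr{A}$ the following conditions are equivalent: (i) there exists a descending sequence $X_1\supseteq X_2\supseteq\cdots$ of topologically mixing sofic shifts such that $X=\bigcap_{n=1}^\infty X_n$ and $\bar d^H(X,X_n)\to 0$ as $n\to\infty$; (ii) $\sigma(X)=X$ and $X$ has the $\bar d$-shadowing property; (iii) $X$ is chain mixing and $\bar d$-approachable.
   Context: $\mathscr{A}^\infty=\mathscr{A}^{\mathbb{N}_0}$, $\sigma$ the left shift; a shift space is a nonempty closed $\sigma$-invariant subset. $\mathcal{L}(X)$ is the set of finite words appearing in elements of $X$, $\mathcal{L}_n(X)$ those of length $n$. $X$ is topologically mixing if for all $u,w\in\mathcal L(X)$ there is $N$ such that for all $n\ge N$ there is $v$ with $|v|=n$ and $uvw\in\mathcal L(X)$; transitive if for all $u,w\in\mathcal L(X)$ there is $v$ with $uvw\in\mathcal L(X)$. A sofic shift is the set of label sequences of infinite paths in a finite edge-labelled directed graph. For $x,y\in\mathscr{A}^\infty$, $\bar d(x,y)=\limsup_{n\to\infty}\frac1n|\{0\le j<n:x_j\ne y_j\}|$; for nonempty $A,B\subseteq\mathscr{A}^\infty$, $\bar d^H(A,B)=\max\{\sup_{a\in A}\inf_{b\in B}\bar d(a,b),\sup_{b\in B}\inf_{a\in A}\bar d(a,b)\}$. The $n$-th Markov approximation $X^M_n$ of $X$ is the shift of finite type of all $x\in\mathscr{A}^\infty$ every subword of length $n+1$ of which lies in $\mathcal L_{n+1}(X)$ (so $\mathcal L_j(X^M_n)=\mathcal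 L_j(X)$ for $j\le n+1$). $X$ is $\bar d$-approachable if $\bar d^H(X^M_n,X)\to0$. $X$ is chain mixing (resp. chain transitive) if $X^M_n$ is topologically mixing (resp. transitive) for all but finitely many $n$. $X$ has the $\bar d$-shadowing property if for every $\varepsilon>0$ there is $N\in\mathbb N$ such that for every sequence $(w^{(j)})_{j\ge1}$ of words in $\mathcal L(X)$ with $|w^{(j)}|\ge N$ for all $j$ there is $x'\in X$ with $\bar d(w^{(1)}w^{(2)}w^{(3)}\cdots,x')<\varepsilon$. *)

theory Defs
  imports "HOL-Analysis.Analysis"
begin

text \<open>The topology on the full shift is the product of discrete topologies; a set X is
  closed iff every point all of whose prefixes are prefixes of points of X lies in X.\<close>

definition shift :: "(nat \<Rightarrow> 'a) \<Rightarrow> (nat \<Rightarrow> 'a)" where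
  "shift x = (\<lambda>i. x (Suc i))"

definition seq_closed :: "(nat \<Rightarrow> 'a) set \<Rightarrow> bool" where
  "seq_closed X \<longleftrightarrow> (\<forall>x. (\<forall>n. \<exists>y\<in>X. \<forall>i<n. y i = x i) \<longrightarrow> x \<in> X)"

definition shift_space :: "(nat \<Rightarrow> 'a) set \<Rightarrow> bool" where
  "shift_space X \<longleftrightarrow> X \<noteq> {} \<and> seq_closed X \<and> shift ` X \<subseteq> X"

definition occurs_in :: "'a list \<Rightarrow> (nat \<Rightarrow> 'a) \<Rightarrow> bool" where
  "occurs_in w x \<longleftrightarrow> (\<exists>i. w = map x [i..<i + length w])"

definition lang :: "(nat \<Rightarrow> 'a) set \<Rightarrow> 'a list set" where
  "lang X = {w. \<exists>x\<in>X. occurs_in w x}"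

definition top_mixing :: "(nat \<Rightarrow> 'a) set \<Rightarrow> bool" where
  "top_mixing X \<longleftrightarrow> (\<forall>u\<in>lang X. \<forall>w\<in>lang X. \<exists>N. \<forall>n\<ge>N.
      \<exists>v. length v = n \<and> u @ v @ w \<in> lang X)"

definition top_transitive :: "(nat \<Rightarrow> 'a) set \<Rightarrow> bool" where
  "top_transitive X \<longleftrightarrow> (\<forall>u\<in>lang X. \<forall>w\<in>lang X. \<exists>v. u @ v @ w \<in> lang X)"

text \<open>Sofic shift: label sequences of infinite paths in a finite edge-labelled
  directed graph (vertices taken from nat, edges (source, label, target)); required to be a shift space.\<close>
definition sofic :: "(nat \<Rightarrow> 'a) set \<Rightarrow> bool" where
  "sofic X \<longleftrightarrow> shift_space X \<and>
     (\<exists>E :: (nat \<times> 'a \<times> nat) set. finite E \<and>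
        X = {x. \<exists>p :: nat \<Rightarrow> nat. \<forall>i. (p i, x i, p (Suc i)) \<in> E})"

definition dbar :: "(nat \<Rightarrow> 'a) \<Rightarrow> (nat \<Rightarrow> 'a) \<Rightarrow> real" where
  "dbar x y = real_of_ereal
     (limsup (\<lambda>n. ereal (real (card {j. j < n \<and> x j \<noteq> y j}) / real n)))"

definition dbarH :: "(nat \<Rightarrow> 'a) set \<Rightarrow> (nat \<Rightarrow> 'a) set \<Rightarrow> real" where
  "dbarH A B = max (SUP a\<in>A. INF b\<in>B. dbar a b) (SUP b\<in>B. INF a\<in>A. dbar a b)"

definition markov :: "(nat \<Rightarrow> 'a) set \<Rightarrow> nat \<Rightarrow> (nat \<Rightarrow> 'a) set" where
  "markov X n = {x. \<forall>i. map x [i..<i + (n + 1)] \<in> lang X}"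

definition dbar_approachable :: "(nat \<Rightarrow> 'a) set \<Rightarrow> bool" where
  "dbar_approachable X \<longleftrightarrow> (\<lambda>n. dbarH (markov X n) X) \<longlonglongrightarrow> 0"

definition chain_mixing :: "(nat \<Rightarrow> 'a) set \<Rightarrow> bool" where
  "chain_mixing X \<longleftrightarrow> (\<forall>\<^sub>F n in sequentially. top_mixing (markov X n))"

definition chain_transitive :: "(nat \<Rightarrow> 'a) set \<Rightarrow> bool" where
  "chain_transitive X \<longleftrightarrow> (\<forall>\<^sub>F n in sequentially. top_transitive (markov X n))"

text \<open>Infinite concatenation w 0 w 1 w 2 ... (meaningful when all words are nonempty).\<close>
definition concat_inf :: "(nat \<Rightarrow> 'a list) \<Rightarrow> nat \<Rightarrow> 'a" where
  "concat_inf w i = (let j = (LEAST j. i < (\<Sum>k\<le>j. length (w k)))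
                     in w j ! (i - (\<Sum>k<j. length (w k))))"

definition dbar_shadowing :: "(nat \<Rightarrow> 'a) set \<Rightarrow> bool" where
  "dbar_shadowing X \<longleftrightarrow> (\<forall>\<epsilon>>0. \<exists>N::nat. N \<ge> 1 \<and>
     (\<forall>w :: nat \<Rightarrow> 'a list. (\<forall>j. w j \<in> lang X \<and> length (w j) \<ge> N) \<longrightarrow>
        (\<exists>x'\<in>X. dbar (concat_inf w) x' < \<epsilon>)))"

end

theory Submission
  imports Defs
begin

text \<open>
  (iii) \<Longrightarrow> (i): the Markov approximations are sofic, decrease to X, are eventually mixing and
  converge in the Hausdorff d-bar distance.

  (i) \<Longrightarrow> (ii): in a mixing sofic shift, whether u v w is a word depends on u and w only through
  the finitely many sets of vertices at which paths reading u end and paths reading w start, so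
  there is a uniform gap length M. Overwriting the last M letters of each long word of a
  concatenation with such gaps yields a point of the sofic shift at d-bar distance at most 2M/N,
  and the sofic shift is d-bar close to X. Every point of X has preimages in all approximations;
  by pigeonhole one symbol works for infinitely many of them, hence for all.

  (ii) \<Longrightarrow> (iii): a point of the n-th Markov approximation is the concatenation of its blocks,
  which are words of X, and shadowing gives approachability. A shadowing point of a periodic, or
  of an alternating, concatenation agrees with it on all but a small density of n-windows;
  this produces cycles of all large lengths and paths between any two n-words in the de Bruijn
  graph of the n-th Markov approximation, which is therefore mixing.
\<close>

section \<open>Upper density of disagreement\<close>

definition disagreements :: "(nat \<Rightarrow> 'a) \<Rightarrow> (nat \<Rightarrow> 'a) \<Rightarrow> nat \<Rightarrow> nat" where
  "disagreements x y n = card {j. j < n \<and> x j \<noteq> y j}"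

lemma disagreements_le: "disagreements x y n \<le> n"
  unfolding disagreements_def by (rule order.trans[OF card_mono[of "{..<n}"]]) auto

lemma disagreements_commute: "disagreements x y n = disagreements y x n"
proof -
  have "{j. j < n \<and> x j \<noteq> y j} = {j. j < n \<and> y j \<noteq> x j}"
    by metis
  then show ?thesis unfolding disagreements_def by (rule arg_cong)
qed

lemma disagreements_triangle: "disagreements x z n \<le> disagreements x y n + disagreements y z n"
proof -
  have sub: "{j. j < n \<and> x j \<noteq> z j} \<subseteq> {j. j < n \<and> x j \<noteq> y j} \<union> {j. j < n \<and> y j \<noteq> z j}"
    by auto
  show ?thesis
    unfolding disagreements_def by (rule order.trans[OF card_mono[OF _ sub] card_Un_le]) simp
qed

lemma disagreement_ratio_bounds:
  "0 \<le> real (disagreements x y n) / real n" "real (disagreements x y n) / real n \<le> 1"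
  using disagreements_le[of x y n] by (auto simp: divide_le_eq_1)

lemma ereal_dbar: "ereal (dbar x y) = limsup (\<lambda>n. ereal (real (disagreements x y n) / real n))"
proof -
  let ?l = "limsup (\<lambda>n. ereal (real (disagreements x y n) / real n))"
  have "0 \<le> ?l" by (rule le_Limsup) (auto simp: disagreement_ratio_bounds)
  moreover have "?l \<le> 1" by (rule Limsup_bounded) (auto simp: disagreement_ratio_bounds)
  ultimately have "\<bar>?l\<bar> \<noteq> \<infinity>" by (cases ?l) auto
  then show ?thesis unfolding dbar_def disagreements_def[symmetric] by (rule ereal_real')
qed

lemma dbar_nonneg: "0 \<le> dbar x y"
  using le_Limsup[of sequentially 0 "\<lambda>n. ereal (real (disagreements x y n) / real n)"]
  by (simp add: ereal_dbar[symmetric] disagreement_ratio_bounds zero_ereal_def)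

lemma dbar_le_1: "dbar x y \<le> 1"
  using Limsup_bounded[of "\<lambda>n. ereal (real (disagreements x y n) / real n)" 1 sequentially]
  by (simp add: ereal_dbar[symmetric] disagreement_ratio_bounds one_ereal_def)

lemma dbar_commute: "dbar x y = dbar y x"
proof -
  have "ereal (dbar x y) = ereal (dbar y x)"
    unfolding ereal_dbar disagreements_commute[of x y] ..
  then show ?thesis by simp
qed

lemma eventually_disagreement_ratio_less:
  assumes "dbar x y < c"
  shows "\<forall>\<^sub>F n in sequentially. real (disagreements x y n) / real n < c"
proof -
  have "limsup (\<lambda>n. ereal (real (disagreements x y n) / real n)) < ereal c"
    using assms by (simp add: ereal_dbar[symmetric])
  from Limsup_lessD[OF this] show ?thesis by simp
qed

lemma dbar_le_if_eventually:
  assumes "\<forall>\<^sub>F n in sequentially. real (disagreements x y n) / real n \<le> c"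
  shows "dbar x y \<le> c"
proof -
  have "limsup (\<lambda>n. ereal (real (disagreements x y n) / real n)) \<le> ereal c"
    by (rule Limsup_bounded) (use assms in \<open>auto elim: eventually_mono\<close>)
  then show ?thesis by (simp add: ereal_dbar[symmetric])
qed

lemma dbar_self: "dbar x x = 0"
  using dbar_le_if_eventually[of x x 0] dbar_nonneg[of x x] by (simp add: disagreements_def)

lemma dbar_triangle: "dbar x z \<le> dbar x y + dbar y z"
proof (rule field_le_epsilon)
  fix d :: real assume "d > 0"
  have "\<forall>\<^sub>F n in sequentially. real (disagreements x y n) / real n < dbar x y + d / 2"
    "\<forall>\<^sub>F n in sequentially. real (disagreements y z n) / real n < dbar y z + d / 2"
    by (rule eventually_disagreement_ratio_less, use \<open>d > 0\<close> in simp)+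
  then have "\<forall>\<^sub>F n in sequentially. real (disagreements x z n) / real n \<le> dbar x y + dbar y z + d"
  proof eventually_elim
    case (elim n)
    have "real (disagreements x z n) / real n
        \<le> real (disagreements x y n) / real n + real (disagreements y z n) / real n"
      using disagreements_triangle[of x z n y]
      by (simp add: add_divide_distrib[symmetric] divide_right_mono)
    with elim show ?case by linarith
  qed
  then show "dbar x z \<le> dbar x y + dbar y z + d" by (rule dbar_le_if_eventually)
qed

lemma dbarH_commute: "dbarH A B = dbarH B A"
  unfolding dbarH_def by (simp add: dbar_commute[of _ "_ :: nat \<Rightarrow> _"] max.commute)

lemma bdd_below_dbar_image: "bdd_below ((\<lambda>b. dbar a b) ` B)" "bdd_below ((\<lambda>a. dbar a b) ` A)"
  by (auto intro!: bdd_belowI[of _ 0] simp: dbar_nonneg)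

lemma INF_dbar_le_1:
  "b \<in> B \<Longrightarrow> (INF b\<in>B. dbar a b) \<le> 1" "a \<in> A \<Longrightarrow> (INF a\<in>A. dbar a b) \<le> 1"
  using cINF_lower[OF bdd_below_dbar_image(1), of b B a] cINF_lower[OF bdd_below_dbar_image(2), of a A b]
    dbar_le_1[of a b] by linarith+

lemma bdd_above_INF_dbar:
  "B \<noteq> {} \<Longrightarrow> bdd_above ((\<lambda>a. INF b\<in>B. dbar a b) ` A)"
  "A \<noteq> {} \<Longrightarrow> bdd_above ((\<lambda>b. INF a\<in>A. dbar a b) ` B)"
  by (rule bdd_aboveI[of _ 1], use INF_dbar_le_1 in blast)+

lemma dbarH_le:
  assumes "A \<noteq> {}" "B \<noteq> {}"
    and "\<And>a. a \<in> A \<Longrightarrow> \<exists>b\<in>B. dbar a b \<le> c" "\<And>b. b \<in> B \<Longrightarrow> \<exists>a\<in>A. dbar a b \<le> c"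
  shows "dbarH A B \<le> c"
proof -
  have "(INF b\<in>B. dbar a b) \<le> c" if "a \<in> A" for a
    using assms(3)[OF that] cINF_lower[OF bdd_below_dbar_image(1)] by (meson order.trans)
  moreover have "(INF a\<in>A. dbar a b) \<le> c" if "b \<in> B" for b
    using assms(4)[OF that] cINF_lower[OF bdd_below_dbar_image(2), of _ A b] by (meson order.trans)
  ultimately show ?thesis
    unfolding dbarH_def using assms(1,2) by (simp add: cSUP_least)
qed

lemma dbarH_nonneg:
  assumes "A \<noteq> {}" "B \<noteq> {}"
  shows "0 \<le> dbarH A B"
proof -
  obtain a where "a \<in> A" using assms(1) by blast
  have "0 \<le> (INF b\<in>B. dbar a b)" by (rule cINF_greatest[OF assms(2)]) (simp add: dbar_nonneg)
  also have "\<dots> \<le> (SUP a\<in>A. INF b\<in>B. dbar a b)"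
    by (rule cSUP_upper[OF \<open>a \<in> A\<close> bdd_above_INF_dbar(1)[OF assms(2)]])
  finally show ?thesis unfolding dbarH_def by simp
qed

lemma dbarH_less_imp:
  assumes "A \<noteq> {}" "b \<in> B" "dbarH A B < c"
  shows "\<exists>a\<in>A. dbar a b < c"
proof -
  have "(INF a\<in>A. dbar a b) \<le> (SUP b\<in>B. INF a\<in>A. dbar a b)"
    by (rule cSUP_upper[OF assms(2) bdd_above_INF_dbar(2)[OF assms(1)]])
  also have "\<dots> \<le> dbarH A B" unfolding dbarH_def by simp
  finally have "(INF a\<in>A. dbar a b) < c" using assms(3) by simp
  then show ?thesis using cINF_less_iff[OF assms(1) bdd_below_dbar_image(2)] by blast
qed

definition window :: "(nat \<Rightarrow> 'a) \<Rightarrow> nat \<Rightarrow> nat \<Rightarrow> 'a list" where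
  "window x i n = map x [i..<i + n]"

lemma length_window [simp]: "length (window x i n) = n"
  by (simp add: window_def)

lemma nth_window [simp]: "t < n \<Longrightarrow> window x i n ! t = x (i + t)"
  by (simp add: window_def)

lemma window_0 [simp]: "window x i 0 = []"
  by (simp add: window_def)

lemma window_eq_iff: "window x i n = window y j n \<longleftrightarrow> (\<forall>t<n. x (i + t) = y (j + t))"
  by (auto simp: list_eq_iff_nth_eq)

lemma window_eq_list_iff: "window x i (length u) = u \<longleftrightarrow> (\<forall>t<length u. x (i + t) = u ! t)"
  by (auto simp: list_eq_iff_nth_eq)

lemma window_add: "window x i (m + k) = window x i m @ window x (i + m) k"
  unfolding window_def add.assoc[symmetric]
  by (simp only: upt_add_eq_append[of i "i + m" k, OF le_add1] map_append)

lemma window_Suc: "window x i (Suc n) = x i # window x (Suc i) n"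
  by (simp add: window_def upt_conv_Cons del: upt_Suc)

lemma window_shifted: "window (\<lambda>j. x (k + j)) i n = window x (k + i) n"
  by (simp add: window_eq_iff add.assoc)

lemma lang_iff_window: "w \<in> lang X \<longleftrightarrow> (\<exists>x\<in>X. \<exists>i. window x i (length w) = w)"
  unfolding lang_def occurs_in_def window_def by (auto intro: sym)

lemma window_in_lang: "x \<in> X \<Longrightarrow> window x i n \<in> lang X"
  unfolding lang_iff_window by force

lemma lang_mono: "X \<subseteq> Y \<Longrightarrow> lang X \<subseteq> lang Y"
  unfolding lang_def by auto

lemma lang_infix:
  assumes "u @ v @ w \<in> lang X"
  shows "v \<in> lang X"
proof -
  obtain x i where "x \<in> X" "window x i (length u + length v + length w) = u @ v @ w"
    using assms unfolding lang_iff_window by (auto simp: add.assoc)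
  then have "window x (i + length u) (length v) = v"
    unfolding window_add by (simp add: append_eq_append_conv)
  with \<open>x \<in> X\<close> show ?thesis using window_in_lang by metis
qed

lemma lang_prefix: "u @ v \<in> lang X \<Longrightarrow> u \<in> lang X"
  using lang_infix[of "[]" u v X] by simp

lemma lang_suffix: "u @ v \<in> lang X \<Longrightarrow> v \<in> lang X"
  using lang_infix[of u v "[]" X] by simp

lemma shift_space_nonempty: "shift_space X \<Longrightarrow> X \<noteq> {}"
  by (simp add: shift_space_def)

lemma shift_space_suffix:
  assumes "shift_space X" "x \<in> X"
  shows "(\<lambda>j. x (i + j)) \<in> X"
proof (induction i)
  case (Suc i)
  then have "shift (\<lambda>j. x (i + j)) \<in> X" using assms(1) unfolding shift_space_def by blast
  then show ?case by (simp add: shift_def)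
qed (use assms in simp)

lemma lang_prefix_point:
  assumes "shift_space X" "w \<in> lang X"
  shows "\<exists>y\<in>X. window y 0 (length w) = w"
proof -
  obtain x i where "x \<in> X" "window x i (length w) = w"
    using assms(2) unfolding lang_iff_window by blast
  then show ?thesis
    using shift_space_suffix[OF assms(1)] window_shifted[of x i 0 "length w"] by fastforce
qed

lemma shift_space_memI:
  assumes "shift_space X" "\<And>k. window x 0 k \<in> lang X"
  shows "x \<in> X"
proof -
  have "\<exists>y\<in>X. \<forall>i<k. y i = x i" for k
    using lang_prefix_point[OF assms(1) assms(2)[of k]] by (auto simp: window_eq_iff)
  then show ?thesis using assms(1) unfolding shift_space_def seq_closed_def by blast
qed

lemma shift_surj_preimage_iter:
  assumes "shift ` X = X" "x \<in> X"
  shows "\<exists>y\<in>X. \<forall>i. y (j + i) = x i"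
proof (induction j)
  case (Suc j)
  then obtain y where "y \<in> X" "\<forall>i. y (j + i) = x i" by blast
  moreover obtain y' where "y' \<in> X" "shift y' = y" using assms(1) \<open>y \<in> X\<close> by force
  ultimately show ?case by (auto simp: shift_def)
qed (use assms in auto)

lemma concat_inf_block:
  assumes "r < length (w j)"
  shows "concat_inf w ((\<Sum>k<j. length (w k)) + r) = w j ! r"
proof -
  define S where "S j = (\<Sum>k<j. length (w k))" for j
  have S_mono: "S a \<le> S b" if "a \<le> b" for a b
    unfolding S_def by (rule sum_mono2) (use that in auto)
  have "(LEAST j'. S j + r < S (Suc j')) = j"
  proof (rule Least_equality)
    show "S j + r < S (Suc j)" using assms by (simp add: S_def)
    show "j \<le> j'" if "S j + r < S (Suc j')" for j'
      using S_mono[of "Suc j'" j] that by (cases "j \<le> j'") auto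
  qed
  moreover have "(\<Sum>k\<le>j'. length (w k)) = S (Suc j')" for j'
    by (simp add: S_def lessThan_Suc_atMost)
  ultimately show ?thesis unfolding concat_inf_def Let_def S_def[symmetric] by simp
qed

lemma concat_inf_const_length:
  assumes "\<And>k. length (w k) = L" "1 \<le> L"
  shows "concat_inf w i = w (i div L) ! (i mod L)"
  using concat_inf_block[of "i mod L" w "i div L"] assms by (simp add: mult.commute)

lemma concat_inf_block_decomp:
  fixes w :: "nat \<Rightarrow> 'a list"
  assumes "\<And>k. 1 \<le> length (w k)"
  shows "\<exists>j r. r < length (w j) \<and> i = (\<Sum>k<j. length (w k)) + r"
proof -
  define S where "S m = (\<Sum>k<m. length (w k))" for m
  have "m \<le> S m" for m
  proof (induction m)
    case (Suc m)
    then show ?case using assms[of m] by (simp add: S_def)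
  qed simp
  then have "\<exists>m. i < S (Suc m)" using Suc_le_lessD by blast
  define m where "m = (LEAST m. i < S (Suc m))"
  have "i < S (Suc m)" unfolding m_def by (rule LeastI_ex) fact
  moreover have "S m \<le> i"
  proof (cases m)
    case (Suc m')
    then show ?thesis using not_less_Least[of m' "\<lambda>m. i < S (Suc m)"] unfolding m_def by simp
  qed (simp add: S_def)
  ultimately show ?thesis by (intro exI[of _ m] exI[of _ "i - S m"]) (simp add: S_def)
qed

lemma window_concat_inf:
  shows "window (concat_inf w) 0 (\<Sum>k<j. length (w k)) = concat (map w [0..<j])"
proof (induction j)
  case (Suc j)
  have "window (concat_inf w) (\<Sum>k<j. length (w k)) (length (w j)) = w j"
    unfolding window_eq_list_iff using concat_inf_block by blast
  with Suc show ?case by (simp add: window_add)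
qed simp

lemma div_mod_add_small:
  fixes i t L :: nat
  assumes "i mod L + t < L"
  shows "(i + t) div L = i div L" "(i + t) mod L = i mod L + t"
proof -
  have "i + t = i div L * L + (i mod L + t)" by simp
  then show "(i + t) div L = i div L" "(i + t) mod L = i mod L + t"
    using assms by (metis div_mult_self3 div_less add_0_right less_zeroE mod_less mod_mult_self3)+
qed

lemma window_concat_inf_alternating:
  assumes "1 \<le> L" "i mod L + n \<le> L"
  shows "window (concat_inf (\<lambda>j. if even j then window a 0 L else window b 0 L)) i n
    = window (if even (i div L) then a else b) (i mod L) n"
proof -
  have "i mod L + t < L" if "t < n" for t using that assms(2) by linarith
  then show ?thesis
    using concat_inf_const_length[of "\<lambda>j. if even j then window a 0 L else window b 0 L" L] assms(1)
      div_mod_add_small[of i L] by (simp add: window_eq_iff)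
qed

section \<open>Markov approximations\<close>

lemma markov_iff: "x \<in> markov X n \<longleftrightarrow> (\<forall>i. window x i (n + 1) \<in> lang X)"
  by (simp add: markov_def window_def)

lemma markov_window_in_lang:
  assumes "x \<in> markov X n" "k \<le> n + 1"
  shows "window x i k \<in> lang X"
  using assms lang_prefix window_add[of x i k "n + 1 - k"] by (metis le_add_diff_inverse markov_iff)

lemma subset_markov: "X \<subseteq> markov X n"
  by (auto simp: markov_iff window_in_lang)

lemma markov_Suc_subset: "markov X (Suc n) \<subseteq> markov X n"
  using markov_window_in_lang[of _ X "Suc n" "n + 1"] by (auto simp: markov_iff[of _ X n])

lemma decseq_markov: "decseq (\<lambda>m. markov X (m + k))"
  by (rule decseq_SucI) (simp add: markov_Suc_subset)

lemma Inter_markov: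
  assumes "shift_space X"
  shows "(\<Inter>m. markov X (m + k)) = X"
proof (intro equalityI subsetI)
  fix x assume "x \<in> (\<Inter>m. markov X (m + k))"
  then have "window x 0 j \<in> lang X" for j
    using markov_window_in_lang[of x X "j + k" j 0] by auto
  then show "x \<in> X" by (rule shift_space_memI[OF assms])
qed (use subset_markov in blast)

definition glue :: "(nat \<Rightarrow> 'a) \<Rightarrow> nat \<Rightarrow> (nat \<Rightarrow> 'a) \<Rightarrow> nat \<Rightarrow> nat \<Rightarrow> 'a" where
  "glue x p z q i = (if i < p then x i else z (i - p + q))"

lemma glue_left [simp]: "i < p \<Longrightarrow> glue x p z q i = x i"
  by (simp add: glue_def)

lemma glue_right [simp]: "glue x p z q (p + i) = z (q + i)"
  by (simp add: glue_def add.commute)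

lemma glue_overlap:
  assumes "window x p n = window z q n" "i < p + n"
  shows "glue x p z q i = x i"
proof (cases "i < p")
  case False
  then have "i - p < n" using assms(2) by simp
  then have "x (p + (i - p)) = z (q + (i - p))" using assms(1) unfolding window_eq_iff by blast
  with False show ?thesis by (simp add: glue_def add.commute)
qed simp

lemma window_glue_overlap:
  assumes "window x p n = window z q n" "i \<le> p"
  shows "window (glue x p z q) i n = window x i n"
  using glue_overlap[OF assms(1)] assms(2) by (simp add: window_eq_iff)

lemma window_glue_left: "i + k \<le> p \<Longrightarrow> window (glue x p z q) i k = window x i k"
  by (simp add: window_eq_iff)

lemma window_glue_right: "window (glue x p z q) (p + i) k = window z (q + i) k"
  using glue_right[of x p z q] by (simp add: window_eq_iff add.assoc)

lemma glue_in_markov: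
  assumes "x \<in> markov X n" "z \<in> markov X n" "window x p n = window z q n"
  shows "glue x p z q \<in> markov X n"
  unfolding markov_iff
proof
  fix i
  show "window (glue x p z q) i (n + 1) \<in> lang X"
  proof (cases "i < p")
    case True
    then have "window (glue x p z q) i (n + 1) = window x i (n + 1)"
      using glue_overlap[OF assms(3)] by (simp add: window_eq_iff)
    then show ?thesis using assms(1) by (simp add: markov_iff)
  next
    case False
    then have "window (glue x p z q) i (n + 1) = window z (i - p + q) (n + 1)"
      by (simp add: window_eq_iff glue_def algebra_simps)
    then show ?thesis using assms(2) by (simp add: markov_iff)
  qed
qed

lemma markov_shift_space:
  assumes "shift_space X"
  shows "shift_space (markov X n)"
  unfolding shift_space_def
proof (intro conjI)
  show "markov X n \<noteq> {}"
    using assms subset_markov unfolding shift_space_def by blast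
  show "shift ` markov X n \<subseteq> markov X n"
  proof (intro image_subsetI)
    fix x assume "x \<in> markov X n"
    moreover have "window (shift x) i (n + 1) = window x (Suc i) (n + 1)" for i
      by (simp add: window_eq_iff shift_def)
    ultimately show "shift x \<in> markov X n" by (simp add: markov_iff)
  qed
  show "seq_closed (markov X n)"
    unfolding seq_closed_def markov_iff
  proof (intro allI impI)
    fix x i assume "\<forall>m. \<exists>y\<in>markov X n. \<forall>j<m. y j = x j"
    then obtain y where "y \<in> markov X n" "\<forall>j<i + (n + 1). y j = x j" by blast
    then have "window x i (n + 1) = window y i (n + 1)" by (simp add: window_eq_iff)
    with \<open>y \<in> markov X n\<close> show "window x i (n + 1) \<in> lang X" by (simp add: markov_iff)
  qed
qed

lemma overlapping_words_eq_window:
  assumes "\<And>i. length (W i) = n + 1" "\<And>i. hd (W i) = x i"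
    and "\<And>i. tl (W i) = take n (W (Suc i))"
  shows "W i = window x i (n + 1)"
proof -
  have "W i ! t = x (i + t)" if "t \<le> n" for t
    using that
  proof (induction t arbitrary: i)
    case 0
    have "W i \<noteq> []" using assms(1)[of i] by auto
    then show ?case using assms(2)[of i] by (simp add: hd_conv_nth)
  next
    case (Suc t)
    have "W i ! Suc t = tl (W i) ! t" using Suc.prems assms(1)[of i] by (simp add: nth_tl)
    also have "\<dots> = W (Suc i) ! t" using Suc.prems by (simp add: assms(3))
    finally show ?case using Suc by simp
  qed
  then show ?thesis by (simp add: list_eq_iff_nth_eq assms(1))
qed

text \<open>The vertices are the n-words, numbered by to_nat; each (n+1)-word of X is an edge from its
  first n letters to its last n letters.\<close>

definition markov_graph :: "(nat \<Rightarrow> 'a::countable) set \<Rightarrow> nat \<Rightarrow> (nat \<times> 'a \<times> nat) set" where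
  "markov_graph X n = (\<lambda>W. (to_nat (take n W), hd W, to_nat (tl W))) ` {W \<in> lang X. length W = n + 1}"

lemma finite_markov_graph: "finite (markov_graph (X :: (nat \<Rightarrow> 'a::finite) set) n)"
proof -
  have "finite {W :: 'a list. length W = n + 1}"
    using finite_lists_length_eq[of "UNIV :: 'a set"] by simp
  then show ?thesis unfolding markov_graph_def by (auto intro: finite_subset)
qed

lemma markov_eq_paths:
  fixes X :: "(nat \<Rightarrow> 'a::countable) set"
  shows "markov X n = {x. \<exists>p. \<forall>i. (p i, x i, p (Suc i)) \<in> markov_graph X n}"
proof (intro equalityI subsetI CollectI)
  fix x assume "x \<in> markov X n"
  have "(to_nat (window x i n), x i, to_nat (window x (Suc i) n)) \<in> markov_graph X n" for i
  proof -
    have "take n (window x i (n + 1)) = window x i n"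
      using window_add[of x i n 1] by simp
    moreover have "hd (window x i (n + 1)) = x i" "tl (window x i (n + 1)) = window x (Suc i) n"
      by (simp_all add: window_Suc)
    moreover have "window x i (n + 1) \<in> lang X" using \<open>x \<in> markov X n\<close> by (simp add: markov_iff)
    ultimately show ?thesis
      unfolding markov_graph_def by (intro rev_image_eqI[of "window x i (n + 1)"]) auto
  qed
  then show "\<exists>p. \<forall>i. (p i, x i, p (Suc i)) \<in> markov_graph X n"
    by (intro exI[of _ "\<lambda>i. to_nat (window x i n)"]) simp
next
  fix x assume "x \<in> {x. \<exists>p. \<forall>i. (p i, x i, p (Suc i)) \<in> markov_graph X n}"
  then obtain p where "\<forall>i. (p i, x i, p (Suc i)) \<in> markov_graph X n" by blast
  then have "\<forall>i. \<exists>W. W \<in> lang X \<and> length W = n + 1 \<and> to_nat (take n W) = p i \<and> hd W = x i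
      \<and> to_nat (tl W) = p (Suc i)"
    unfolding markov_graph_def image_iff by (metis (mono_tags, lifting) mem_Collect_eq prod.inject)
  then obtain W where W: "\<And>i. W i \<in> lang X" "\<And>i. length (W i) = n + 1"
    "\<And>i. to_nat (take n (W i)) = p i" "\<And>i. hd (W i) = x i" "\<And>i. to_nat (tl (W i)) = p (Suc i)"
    by metis
  have "tl (W i) = take n (W (Suc i))" for i
    using W(3)[of "Suc i"] W(5)[of i] by (metis to_nat_split)
  then have "W i = window x i (n + 1)" for i
    by (rule overlapping_words_eq_window[OF W(2,4)])
  then show "x \<in> markov X n" using W(1) by (simp add: markov_iff)
qed

lemma markov_sofic:
  fixes X :: "(nat \<Rightarrow> 'a::finite) set"
  assumes "shift_space X"
  shows "sofic (markov X n)"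
  unfolding sofic_def using markov_shift_space[OF assms] finite_markov_graph[of X n] markov_eq_paths[of X n]
  by blast

section \<open>Chain mixing approachable shifts are limits of mixing sofic shifts\<close>

definition mixing_sofic_limit :: "(nat \<Rightarrow> 'a) set \<Rightarrow> bool" where
  "mixing_sofic_limit X \<longleftrightarrow> (\<exists>Xs :: nat \<Rightarrow> (nat \<Rightarrow> 'a) set.
     (\<forall>n. sofic (Xs n) \<and> top_mixing (Xs n)) \<and> decseq Xs \<and>
     X = (\<Inter>n. Xs n) \<and> (\<lambda>n. dbarH X (Xs n)) \<longlonglongrightarrow> 0)"

lemma chain_mixing_approachable_imp_mixing_sofic_limit:
  fixes X :: "(nat \<Rightarrow> 'a::finite) set"
  assumes "shift_space X" "chain_mixing X" "dbar_approachable X"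
  shows "mixing_sofic_limit X"
proof -
  obtain k where k: "\<And>n. n \<ge> k \<Longrightarrow> top_mixing (markov X n)"
    using assms(2) unfolding chain_mixing_def eventually_sequentially by blast
  have "(\<lambda>m. dbarH (markov X (m + k)) X) \<longlonglongrightarrow> 0"
    using assms(3) unfolding dbar_approachable_def by (rule LIMSEQ_ignore_initial_segment)
  then have "(\<lambda>m. dbarH X (markov X (m + k))) \<longlonglongrightarrow> 0"
    by (simp add: dbarH_commute)
  then show ?thesis
    unfolding mixing_sofic_limit_def
    using k markov_sofic[OF assms(1)] decseq_markov Inter_markov[OF assms(1)]
    by (intro exI[of _ "\<lambda>m. markov X (m + k)"]) auto
qed

section \<open>Shadowing gives approachability\<close>

lemma dbar_shadowingE:
  assumes "dbar_shadowing X" "0 < e"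
  obtains N where "1 \<le> N"
    "\<And>w. (\<And>j. w j \<in> lang X) \<Longrightarrow> (\<And>j. N \<le> length (w j)) \<Longrightarrow> \<exists>x'\<in>X. dbar (concat_inf w) x' < e"
proof -
  obtain N where "1 \<le> N" "\<forall>w. (\<forall>j. w j \<in> lang X \<and> N \<le> length (w j)) \<longrightarrow>
      (\<exists>x'\<in>X. dbar (concat_inf w) x' < e)"
    using assms unfolding dbar_shadowing_def by blast
  then show ?thesis using that by blast
qed

lemma concat_inf_windows:
  assumes "1 \<le> N"
  shows "concat_inf (\<lambda>j. window x (j * N) N) = x"
proof
  fix i
  have "i mod N < N" using assms by simp
  then show "concat_inf (\<lambda>j. window x (j * N) N) i = x i"
    using concat_inf_const_length[of "\<lambda>j. window x (j * N) N" N i] assms by simp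
qed

lemma shadowing_imp_approachable:
  assumes "shift_space X" "dbar_shadowing X"
  shows "dbar_approachable X"
  unfolding dbar_approachable_def
proof (rule LIMSEQ_I)
  fix r :: real assume "r > 0"
  obtain N where "1 \<le> N" and N: "\<And>w. (\<And>j. w j \<in> lang X) \<Longrightarrow> (\<And>j. N \<le> length (w j)) \<Longrightarrow>
      \<exists>x'\<in>X. dbar (concat_inf w) x' < r / 2"
    by (rule dbar_shadowingE[OF assms(2), of "r / 2"]) (use \<open>r > 0\<close> in auto)
  have "norm (dbarH (markov X n) X - 0) < r" if "n \<ge> N" for n
  proof -
    have ne: "X \<noteq> {}" "markov X n \<noteq> {}"
      using assms(1) subset_markov[of X n] by (auto simp: shift_space_def)
    have "dbarH (markov X n) X \<le> r / 2"
    proof (rule dbarH_le[OF ne(2,1)])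
      fix x assume "x \<in> markov X n"
      then have "window x (j * N) N \<in> lang X" for j
        using markov_window_in_lang that by fastforce
      then have "\<exists>x'\<in>X. dbar (concat_inf (\<lambda>j. window x (j * N) N)) x' < r / 2"
        by (rule N) simp
      then show "\<exists>x'\<in>X. dbar x x' \<le> r / 2"
        unfolding concat_inf_windows[OF \<open>1 \<le> N\<close>] by (blast intro: less_imp_le)
    next
      fix x assume "x \<in> X"
      then show "\<exists>a\<in>markov X n. dbar a x \<le> r / 2"
        using subset_markov[of X n] \<open>r > 0\<close> by (intro bexI[of _ x]) (auto simp: dbar_self)
    qed
    with dbarH_nonneg[OF ne(2,1)] \<open>r > 0\<close> show ?thesis by simp
  qed
  then show "\<exists>N. \<forall>n\<ge>N. norm (dbarH (markov X n) X - 0) < r" by blast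
qed

lemma card_Collect_less_mono: "(T :: nat) \<le> T' \<Longrightarrow> card {i. i < T \<and> P i} \<le> card {i. i < T' \<and> P i}"
  by (rule card_mono) auto

lemma card_Collect_less_shift: "card {i. i < (T :: nat) \<and> P (i + t)} \<le> card {i. i < T + t \<and> P i}"
  by (rule card_inj_on_le[of "\<lambda>i. i + t"]) (auto simp: inj_on_def)

lemma card_disagreeing_windows:
  "card {i. i < T \<and> window z i n \<noteq> window x i n} \<le> n * disagreements z x (T + n)"
proof -
  have sub: "{i. i < T \<and> window z i n \<noteq> window x i n}
      \<subseteq> (\<Union>t<n. {i. i < T \<and> z (i + t) \<noteq> x (i + t)})"
    by (auto simp: window_eq_iff)
  have "card {i. i < T \<and> window z i n \<noteq> window x i n}
      \<le> (\<Sum>t<n. card {i. i < T \<and> z (i + t) \<noteq> x (i + t)})"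
    by (rule order.trans[OF card_mono[OF _ sub] card_UN_le]) auto
  also have "\<dots> \<le> (\<Sum>t<n. disagreements z x (T + n))"
  proof (rule sum_mono)
    fix t assume "t \<in> {..<n}"
    have "card {i. i < T \<and> z (i + t) \<noteq> x (i + t)} \<le> card {j. j < T + n \<and> z j \<noteq> x j}"
      using card_Collect_less_shift[of T "\<lambda>j. z j \<noteq> x j" t]
        card_Collect_less_mono[of "T + t" "T + n" "\<lambda>j. z j \<noteq> x j"] \<open>t \<in> {..<n}\<close> by simp
    then show "card {i. i < T \<and> z (i + t) \<noteq> x (i + t)} \<le> disagreements z x (T + n)"
      by (simp add: disagreements_def)
  qed
  finally show ?thesis by simp
qed

lemma eventually_card_disagreeing_windows:
  assumes "dbar z x < e"
  shows "\<exists>T0. \<forall>T\<ge>T0. real (card {i. i < T \<and> window z i n \<noteq> window x i n}) \<le> real n * e * real (T + n)"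
proof -
  obtain M where M: "\<And>m. m \<ge> M \<Longrightarrow> real (disagreements z x m) / real m < e"
    using eventually_disagreement_ratio_less[OF assms] unfolding eventually_sequentially by blast
  have "real (card {i. i < T \<and> window z i n \<noteq> window x i n}) \<le> real n * e * real (T + n)"
    if "T \<ge> M + 1" for T
  proof -
    have "real (disagreements z x (T + n)) \<le> e * real (T + n)"
      using M[of "T + n"] that by (simp add: divide_less_eq less_imp_le)
    then have "real n * real (disagreements z x (T + n)) \<le> real n * e * real (T + n)"
      by (simp add: mult_left_mono mult.assoc)
    moreover have "real (card {i. i < T \<and> window z i n \<noteq> window x i n})
        \<le> real n * real (disagreements z x (T + n))"
      using card_disagreeing_windows[of T z n x] by (metis of_nat_le_iff of_nat_mult)
    ultimately show ?thesis by linarith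
  qed
  then show ?thesis by blast
qed

text \<open>Below distance 1/(8n), the n-windows on which two points disagree have upper density at most 1/8.\<close>

lemma agreeing_window_in_dense_set:
  assumes "dbar z x < 1 / (8 * real n)" "1 \<le> n"
    and dense: "\<And>T. T \<le> 4 * card {i. i < T \<and> i \<in> S} + C"
  shows "\<exists>i\<ge>I. i \<in> S \<and> window z i n = window x i n"
proof (rule ccontr)
  let ?bad = "\<lambda>T. card {i. i < T \<and> window z i n \<noteq> window x i n}"
  assume contra: "\<not> ?thesis"
  have S_le: "card {i. i < T \<and> i \<in> S} \<le> ?bad T + I" for T
  proof -
    have "{i. i < T \<and> i \<in> S} \<subseteq> {i. i < T \<and> window z i n \<noteq> window x i n} \<union> {..<I}"
      using contra by (auto simp: not_le)
    then have "card {i. i < T \<and> i \<in> S} \<le> card ({i. i < T \<and> window z i n \<noteq> window x i n} \<union> {..<I})"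
      by (rule card_mono[rotated]) simp
    then show ?thesis using card_Un_le[of "{i. i < T \<and> window z i n \<noteq> window x i n}" "{..<I}"] by simp
  qed
  obtain T0 where T0: "\<And>T. T \<ge> T0 \<Longrightarrow> real (?bad T) \<le> real n * (1 / (8 * real n)) * real (T + n)"
    using eventually_card_disagreeing_windows[OF assms(1)] by blast
  define T where "T = T0 + n + 8 * I + 2 * C + 1"
  have "real T \<le> 4 * real (?bad T + I) + real C"
    using order.trans[OF dense[of T] add_right_mono[OF mult_le_mono2[OF S_le]]] by linarith
  also have "\<dots> \<le> real (T + n) / 2 + 4 * real I + real C"
    using T0[of T] assms(2) unfolding T_def by simp
  finally show False unfolding T_def by simp
qed

lemma agreeing_windows_at_distance:
  assumes "dbar z x < 1 / (8 * real n)" "1 \<le> n"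
  shows "\<exists>i. window z i n = window x i n \<and> window z (i + P) n = window x (i + P) n"
proof (rule ccontr)
  let ?bad = "\<lambda>T. card {i. i < T \<and> window z i n \<noteq> window x i n}"
  assume contra: "\<not> ?thesis"
  have cover: "T \<le> ?bad T + ?bad (T + P)" for T
  proof -
    have "{..<T} \<subseteq> {i. i < T \<and> window z i n \<noteq> window x i n}
        \<union> {i. i < T \<and> window z (i + P) n \<noteq> window x (i + P) n}"
      using contra by auto
    then have "card {..<T} \<le> card ({i. i < T \<and> window z i n \<noteq> window x i n}
        \<union> {i. i < T \<and> window z (i + P) n \<noteq> window x (i + P) n})"
      by (rule card_mono[rotated]) simp
    then have "T \<le> ?bad T + card {i. i < T \<and> window z (i + P) n \<noteq> window x (i + P) n}"
      using card_Un_le[of "{i. i < T \<and> window z i n \<noteq> window x i n}"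
          "{i. i < T \<and> window z (i + P) n \<noteq> window x (i + P) n}"] by simp
    then show ?thesis
      using card_Collect_less_shift[of T "\<lambda>i. window z i n \<noteq> window x i n" P] by simp
  qed
  have le: "T \<le> 2 * ?bad (T + P)" for T
    using cover[of T] card_Collect_less_mono[of T "T + P" "\<lambda>i. window z i n \<noteq> window x i n"] by simp
  obtain T0 where T0: "\<And>T. T \<ge> T0 \<Longrightarrow> real (?bad T) \<le> real n * (1 / (8 * real n)) * real (T + n)"
    using eventually_card_disagreeing_windows[OF assms(1)] by blast
  define T where "T = T0 + P + n + 1"
  have "real T \<le> 2 * real (?bad (T + P))"
    using le[of T] by linarith
  also have "\<dots> \<le> real (T + P + n) / 4"
    using T0[of "T + P"] assms(2) unfolding T_def by simp
  finally show False unfolding T_def by simp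
qed

lemma card_periodic_ge:
  assumes "0 < p" "\<And>i. P (i + p) = P i"
  shows "(T div p) * card {i. i < p \<and> P i} \<le> card {i. i < T \<and> P i}"
proof -
  have periodic: "P (q * p + i) = P i" for q i
  proof (induction q)
    case (Suc q)
    then show ?case using assms(2)[of "q * p + i"] by (simp add: algebra_simps)
  qed simp
  have "card {i. i < q * p \<and> P i} = q * card {i. i < p \<and> P i}" for q
  proof (induction q)
    case (Suc q)
    have "{i. i < Suc q * p \<and> P i} = {i. i < q * p \<and> P i} \<union> (\<lambda>i. q * p + i) ` {i. i < p \<and> P i}"
    proof (intro equalityI subsetI)
      fix i assume i: "i \<in> {i. i < Suc q * p \<and> P i}"
      show "i \<in> {i. i < q * p \<and> P i} \<union> (\<lambda>i. q * p + i) ` {i. i < p \<and> P i}"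
      proof (cases "i < q * p")
        case False
        then have "i = q * p + (i - q * p)" "P (i - q * p)" "i - q * p < p"
          using i periodic[of q "i - q * p"] by auto
        then show ?thesis by blast
      qed (use i in simp)
    qed (auto simp: periodic)
    moreover have "card ((\<lambda>i. q * p + i) ` {i. i < p \<and> P i}) = card {i. i < p \<and> P i}"
      by (rule card_image) (simp add: inj_on_def)
    moreover have "card ({i. i < q * p \<and> P i} \<union> (\<lambda>i. q * p + i) ` {i. i < p \<and> P i})
        = card {i. i < q * p \<and> P i} + card ((\<lambda>i. q * p + i) ` {i. i < p \<and> P i})"
      by (rule card_Un_disjoint) auto
    ultimately show ?case using Suc by simp
  qed simp
  moreover have "card {i. i < T div p * p \<and> P i} \<le> card {i. i < T \<and> P i}"
    by (rule card_mono) (auto intro: less_le_trans[OF _ div_times_less_eq_dividend])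
  ultimately show ?thesis by simp
qed

lemma card_block_positions_ge:
  fixes L n e T :: nat
  assumes "1 \<le> n" "2 * n \<le> L" "e \<le> 1"
  shows "T \<le> 4 * card {i. i < T \<and> i div L mod 2 = e \<and> i mod L + n \<le> L} + 2 * L"
proof -
  let ?P = "\<lambda>i. i div L mod 2 = e \<and> i mod L + n \<le> L"
  have sub: "{e * L..<e * L + (L + 1 - n)} \<subseteq> {i. i < 2 * L \<and> ?P i}"
  proof
    fix i assume "i \<in> {e * L..<e * L + (L + 1 - n)}"
    then obtain r where "i = e * L + r" "r < L + 1 - n" by (metis add_diff_inverse_nat atLeastLessThan_iff
        nat_add_left_cancel_less not_less)
    moreover have "r < L" using \<open>r < L + 1 - n\<close> assms by linarith
    ultimately show "i \<in> {i. i < 2 * L \<and> ?P i}" using assms by (cases "e = 0") (auto simp: le_Suc_eq)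
  qed
  have "card {e * L..<e * L + (L + 1 - n)} \<le> card {i. i < 2 * L \<and> ?P i}"
    by (rule card_mono[OF _ sub]) simp
  then have "L + 1 - n \<le> card {i. i < 2 * L \<and> ?P i}" by simp
  then have "L \<le> 2 * card {i. i < 2 * L \<and> ?P i}" using assms by linarith
  then have "T div (2 * L) * (2 * L) \<le> 4 * (T div (2 * L) * card {i. i < 2 * L \<and> ?P i})"
    by simp
  also have "\<dots> \<le> 4 * card {i. i < T \<and> ?P i}"
    using card_periodic_ge[of "2 * L" ?P T] assms by simp
  finally have "T div (2 * L) * (2 * L) \<le> 4 * card {i. i < T \<and> ?P i}" .
  moreover have "T \<le> T div (2 * L) * (2 * L) + 2 * L"
    using div_mult_mod_eq[of T "2 * L"] mod_less_divisor[of "2 * L" T] assms by linarith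
  ultimately show ?thesis by linarith
qed

text \<open>A path of length m from c to d in the de Bruijn graph of n-words of the n-th Markov approximation.\<close>

definition markov_reach :: "(nat \<Rightarrow> 'a) set \<Rightarrow> nat \<Rightarrow> 'a list \<Rightarrow> 'a list \<Rightarrow> nat \<Rightarrow> bool" where
  "markov_reach X n c d m \<longleftrightarrow> (\<exists>y\<in>markov X n. window y 0 n = c \<and> window y m n = d)"

lemma markov_reach_refl: "markov_reach X n c d m \<Longrightarrow> markov_reach X n c c 0"
  unfolding markov_reach_def by auto

lemma markov_reach_trans:
  assumes "markov_reach X n c d m" "markov_reach X n d e m'"
  shows "markov_reach X n c e (m + m')"
proof -
  obtain y where y: "y \<in> markov X n" "window y 0 n = c" "window y m n = d"
    using assms(1) unfolding markov_reach_def by blast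
  obtain y' where y': "y' \<in> markov X n" "window y' 0 n = d" "window y' m' n = e"
    using assms(2) unfolding markov_reach_def by blast
  have overlap: "window y m n = window y' 0 n" using y y' by simp
  have "glue y m y' 0 \<in> markov X n" "window (glue y m y' 0) 0 n = c"
    "window (glue y m y' 0) (m + m') n = e"
    using glue_in_markov[OF y(1) y'(1) overlap] window_glue_overlap[OF overlap, of 0] y(2) y'(3)
      window_glue_right[of y m y' 0 m' n] by simp_all
  then show ?thesis unfolding markov_reach_def by blast
qed

lemma markov_reach_mult: "markov_reach X n c c m \<Longrightarrow> markov_reach X n c c (k * m)"
  by (induction k) (auto intro: markov_reach_refl markov_reach_trans)

lemma markov_reach_window:
  assumes "shift_space X" "y \<in> markov X n" "i \<le> j"
  shows "markov_reach X n (window y i n) (window y j n) (j - i)"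
  unfolding markov_reach_def
  using shift_space_suffix[OF markov_shift_space[OF assms(1)] assms(2), of i] assms(3)
  by (intro bexI[of _ "\<lambda>k. y (i + k)"]) (simp_all add: window_shifted)

lemma sum_of_consecutive_multiples:
  fixes Q m :: nat
  assumes "1 \<le> Q" "Q * Q \<le> m"
  shows "\<exists>a b. m = a * Q + b * (Q + 1)"
proof -
  define q r where "q = m div Q" "r = m mod Q"
  have m: "m = q * Q + r" and "r < Q"
    using assms(1) by (simp_all add: q_r_def)
  have "Q \<le> q"
  proof (rule ccontr)
    assume "\<not> Q \<le> q"
    then have "(q + 1) * Q \<le> Q * Q" by (intro mult_right_mono) auto
    with m \<open>r < Q\<close> assms(2) show False by simp
  qed
  with \<open>r < Q\<close> have "m = (q - r) * Q + r * (Q + 1)"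
    unfolding m by (simp add: algebra_simps diff_mult_distrib)
  then show ?thesis by blast
qed

lemma markov_reach_all_large:
  assumes "markov_reach X n c c Q" "markov_reach X n c c (Q + 1)" "1 \<le> Q" "Q * Q \<le> m"
  shows "markov_reach X n c c m"
proof -
  obtain a b where "m = a * Q + b * (Q + 1)"
    using sum_of_consecutive_multiples[OF assms(3,4)] by blast
  then show ?thesis
    using markov_reach_trans[OF markov_reach_mult[OF assms(1)] markov_reach_mult[OF assms(2)]] by simp
qed

lemma markov_reach_connect:
  assumes "markov_reach X n (window x a n) (window z b n) m" "x \<in> markov X n" "z \<in> markov X n"
  shows "\<exists>y\<in>markov X n. (\<forall>k<a. y k = x k) \<and> (\<forall>k. y (a + m + k) = z (b + k))"
proof -
  obtain y where y: "y \<in> markov X n" "window y 0 n = window x a n" "window y m n = window z b n"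
    using assms(1) unfolding markov_reach_def by blast
  have "glue y m z b \<in> markov X n" "window (glue y m z b) 0 n = window x a n"
    using glue_in_markov[OF y(1) assms(3) y(3)] window_glue_overlap[OF y(3)] y(2) by auto
  then have "glue x a (glue y m z b) 0 \<in> markov X n"
    using glue_in_markov[OF assms(2)] by simp
  then show ?thesis
    by (intro bexI[of _ "glue x a (glue y m z b) 0"]) (simp_all add: add.assoc)
qed

section \<open>Shadowing forces chain mixing\<close>

lemma markov_reach_cycles:
  assumes "shift_space X" "dbar_shadowing X" "1 \<le> n"
  shows "\<exists>N. \<forall>P\<ge>N. \<exists>c\<in>lang X. length c = n \<and> markov_reach X n c c P"
proof -
  obtain N where "1 \<le> N" and N: "\<And>w. (\<And>j. w j \<in> lang X) \<Longrightarrow> (\<And>j. N \<le> length (w j)) \<Longrightarrow>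
      \<exists>x'\<in>X. dbar (concat_inf w) x' < 1 / (8 * real n)"
    by (rule dbar_shadowingE[OF assms(2)]) (use assms(3) in auto)
  obtain x0 where "x0 \<in> X" using assms(1) shift_space_nonempty by blast
  have "\<exists>c\<in>lang X. length c = n \<and> markov_reach X n c c P" if P: "P \<ge> N" for P
  proof -
    define z where "z = concat_inf (\<lambda>_. window x0 0 P)"
    have z: "z i = x0 (i mod P)" for i
      using concat_inf_const_length[of "\<lambda>_. window x0 0 P" P i] \<open>N \<ge> 1\<close> P by (simp add: z_def)
    obtain x' where "x' \<in> X" "dbar z x' < 1 / (8 * real n)"
      using N[of "\<lambda>_. window x0 0 P"] window_in_lang[OF \<open>x0 \<in> X\<close>] P unfolding z_def by auto
    then obtain i where "window z i n = window x' i n" "window z (i + P) n = window x' (i + P) n"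
      using agreeing_windows_at_distance assms(3) by blast
    moreover have "window z (i + P) n = window z i n"
      by (simp add: window_eq_iff z add.commute[of i P] add.assoc)
    ultimately have "markov_reach X n (window x' i n) (window x' i n) P"
      using markov_reach_window[OF assms(1) subsetD[OF subset_markov \<open>x' \<in> X\<close>], of i "i + P" n]
      by (simp del: window_eq_iff)
    then show ?thesis using window_in_lang[OF \<open>x' \<in> X\<close>] by (intro bexI[of _ "window x' i n"]) auto
  qed
  then show ?thesis by blast
qed

text \<open>To lead c to d, shadow the alternating concatenation of a word of X starting with c and a word
  of X ending with d: the shadowing point agrees with the concatenation on some n-window inside a
  c-block and on a later n-window inside a d-block, and these windows are joined by the shadowing point.\<close>

lemma markov_reach_irreducible:
  assumes X: "shift_space X" "shift ` X = X" "dbar_shadowing X" "1 \<le> n"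
    and c: "c \<in> lang X" "length c = n" and d: "d \<in> lang X" "length d = n"
  shows "\<exists>m. markov_reach X n c d m"
proof -
  obtain N where "1 \<le> N" and N: "\<And>w. (\<And>j. w j \<in> lang X) \<Longrightarrow> (\<And>j. N \<le> length (w j)) \<Longrightarrow>
      \<exists>x'\<in>X. dbar (concat_inf w) x' < 1 / (8 * real n)"
    by (rule dbar_shadowingE[OF X(3)]) (use X(4) in auto)
  define L where "L = N + 2 * n"
  obtain a where a: "a \<in> X" "window a 0 n = c" using lang_prefix_point[OF X(1) c(1)] c(2) by blast
  obtain p where p: "p \<in> X" "window p 0 n = d" using lang_prefix_point[OF X(1) d(1)] d(2) by blast
  obtain q where q: "q \<in> X" "\<And>i. q (L - n + i) = p i"
    using shift_surj_preimage_iter[OF X(2) p(1)] by blast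
  define w where "w = (\<lambda>j :: nat. if even j then window a 0 L else window q 0 L)"
  define z where "z = concat_inf w"
  obtain x' where x': "x' \<in> X" "dbar z x' < 1 / (8 * real n)"
    using N[of w] window_in_lang a(1) q(1) unfolding z_def w_def L_def by fastforce
  have window_z: "window z i n = window (if even (i div L) then a else q) (i mod L) n"
    if "i mod L + n \<le> L" for i
    using window_concat_inf_alternating[of L i n a q] that \<open>1 \<le> N\<close> unfolding z_def w_def
    by (simp add: L_def)
  define S where "S e = {i. i div L mod 2 = e \<and> i mod L + n \<le> L}" for e
  have dense: "T \<le> 4 * card {i. i < T \<and> i \<in> S e} + 2 * L" if "e \<le> 1" for T e
    using card_block_positions_ge[of n L e T] that X(4) by (simp add: S_def L_def)
  obtain i1 where i1: "i1 \<in> S 0" "window z i1 n = window x' i1 n"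
    using agreeing_window_in_dense_set[OF x'(2) X(4) dense[of 0]] by auto
  obtain i2 where i2: "i1 \<le> i2" "i2 \<in> S 1" "window z i2 n = window x' i2 n"
    using agreeing_window_in_dense_set[OF x'(2) X(4) dense[of 1], of i1] by auto
  have "markov_reach X n (window a 0 n) (window a (i1 mod L) n) (i1 mod L)"
    using markov_reach_window[OF X(1) subsetD[OF subset_markov a(1)], of 0 "i1 mod L"] by simp
  moreover have "window a (i1 mod L) n = window x' i1 n"
    using i1 window_z[of i1] by (simp add: S_def even_iff_mod_2_eq_zero)
  moreover have "markov_reach X n (window x' i1 n) (window x' i2 n) (i2 - i1)"
    using markov_reach_window[OF X(1) subsetD[OF subset_markov x'(1)] i2(1)] .
  moreover have "window x' i2 n = window q (i2 mod L) n"
    using i2 window_z[of i2] by (simp add: S_def even_iff_mod_2_eq_zero)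
  moreover have "markov_reach X n (window q (i2 mod L) n) (window q (L - n) n) (L - n - i2 mod L)"
    using markov_reach_window[OF X(1) subsetD[OF subset_markov q(1)], of "i2 mod L" "L - n"] i2(2)
    unfolding S_def by (simp add: le_diff_conv2)
  moreover have "window q (L - n) n = d"
    unfolding p(2)[symmetric] by (simp add: window_eq_iff q(2))
  ultimately show ?thesis
    using a(2) by (metis markov_reach_trans)
qed

text \<open>Cycles of the coprime lengths L and L + 1 through two n-words, joined by irreducibility,
  give cycles of two consecutive lengths through a single n-word.\<close>

lemma markov_reach_aperiodic:
  assumes "shift_space X" "shift ` X = X" "dbar_shadowing X" "1 \<le> n"
  shows "\<exists>c\<in>lang X. length c = n \<and> (\<exists>Q. \<forall>m\<ge>Q. markov_reach X n c c m)"
proof -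
  obtain N where N: "\<And>P. N \<le> P \<Longrightarrow> \<exists>c\<in>lang X. length c = n \<and> markov_reach X n c c P"
    using markov_reach_cycles[OF assms(1,3,4)] by blast
  define L where "L = N + 2"
  obtain c1 where c1: "c1 \<in> lang X" "length c1 = n" "markov_reach X n c1 c1 L"
    using N[of L] by (auto simp: L_def)
  obtain c2 where c2: "c2 \<in> lang X" "length c2 = n" "markov_reach X n c2 c2 (L + 1)"
    using N[of "L + 1"] by (auto simp: L_def)
  obtain a where a: "markov_reach X n c1 c2 a"
    using markov_reach_irreducible[OF assms c1(1,2) c2(1,2)] by blast
  obtain b where b: "markov_reach X n c2 c1 b"
    using markov_reach_irreducible[OF assms c2(1,2) c1(1,2)] by blast
  define Q where "Q = a + (L - 1) * (L + 1) + b"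
  have "markov_reach X n c1 c1 Q"
    unfolding Q_def by (rule markov_reach_trans[OF markov_reach_trans[OF a markov_reach_mult[OF c2(3)]] b])
  moreover have "markov_reach X n c1 c1 (a + b + L * L)"
    by (rule markov_reach_trans[OF markov_reach_trans[OF a b] markov_reach_mult[OF c1(3)]])
  moreover have "a + b + L * L = Q + 1" "1 \<le> Q"
    by (simp_all add: Q_def L_def algebra_simps)
  ultimately have "markov_reach X n c1 c1 m" if "Q * Q \<le> m" for m
    using markov_reach_all_large that by metis
  then show ?thesis using c1(1,2) by blast
qed

lemma markov_top_mixing:
  assumes X: "shift_space X" "shift ` X = X" "dbar_shadowing X" "1 \<le> n"
  shows "top_mixing (markov X n)"
  unfolding top_mixing_def
proof (intro ballI)
  fix u w assume u: "u \<in> lang (markov X n)" and w: "w \<in> lang (markov X n)"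
  obtain c1 Q where c1: "c1 \<in> lang X" "length c1 = n" "\<And>m. Q \<le> m \<Longrightarrow> markov_reach X n c1 c1 m"
    using markov_reach_aperiodic[OF X] by blast
  obtain x where x: "x \<in> markov X n" "window x 0 (length u) = u"
    using lang_prefix_point[OF markov_shift_space[OF X(1)] u] by blast
  obtain z i where z: "z \<in> markov X n" "window z i (length w) = w"
    using w unfolding lang_iff_window by blast
  have "window x (length u) n \<in> lang X" "window z i n \<in> lang X"
    using markov_window_in_lang[OF x(1), of n] markov_window_in_lang[OF z(1), of n] by auto
  then obtain s t where s: "markov_reach X n (window x (length u) n) c1 s"
    and t: "markov_reach X n c1 (window z i n) t"
    using markov_reach_irreducible[OF X] c1(1,2) by (metis length_window)
  have "\<exists>v. length v = m \<and> u @ v @ w \<in> lang (markov X n)" if "s + Q + t \<le> m" for m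
  proof -
    have "markov_reach X n (window x (length u) n) (window z i n) (s + (m - s - t) + t)"
      using c1(3) that by (intro markov_reach_trans[OF markov_reach_trans[OF s] t]) simp
    moreover have "s + (m - s - t) + t = m" using that by simp
    ultimately obtain y where y: "y \<in> markov X n" "\<forall>k<length u. y k = x k"
      "\<forall>k. y (length u + m + k) = z (i + k)"
      using markov_reach_connect[OF _ x(1) z(1)] by metis
    have "window y 0 (length u) = window x 0 (length u)"
      using y(2) by (simp add: window_eq_iff)
    moreover have "window y (length u + m) (length w) = window z i (length w)"
      using y(3) by (simp add: window_eq_iff)
    ultimately have "window y 0 (length u) = u" "window y (length u + m) (length w) = w"
      using x(2) z(2) by simp_all
    then have "u @ window y (length u) m @ w = window y 0 (length u + m + length w)"
      by (simp add: window_add)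
    then show ?thesis using window_in_lang[OF y(1)] by (metis length_window)
  qed
  then show "\<exists>N. \<forall>m\<ge>N. \<exists>v. length v = m \<and> u @ v @ w \<in> lang (markov X n)" by blast
qed

lemma shadowing_imp_chain_mixing:
  assumes "shift_space X" "shift ` X = X" "dbar_shadowing X"
  shows "chain_mixing X"
  unfolding chain_mixing_def eventually_sequentially
  using markov_top_mixing[OF assms] by blast

section \<open>Limits of mixing sofic shifts are onto\<close>

lemma finite_value_infinitely_often:
  fixes P :: "nat \<Rightarrow> 'a::finite \<Rightarrow> bool"
  assumes "\<And>k. \<exists>b. P k b"
  shows "\<exists>b. \<forall>K. \<exists>k\<ge>K. P k b"
proof -
  obtain f where f: "\<And>k. P k (f k)" using assms by metis
  obtain b where "infinite {k. f k = b}"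
    using pigeonhole_infinite[of "UNIV :: nat set" f] by auto
  then show ?thesis
    using f unfolding infinite_nat_iff_unbounded_le by (metis mem_Collect_eq)
qed

lemma window_case_nat: "window (case_nat b x) 0 (Suc k) = b # window x 0 k"
  by (simp add: window_Suc window_eq_iff)

lemma top_mixing_preimage:
  fixes Y :: "(nat \<Rightarrow> 'a::finite) set"
  assumes "shift_space Y" "top_mixing Y" "x \<in> Y"
  shows "\<exists>b. case_nat b x \<in> Y"
proof -
  obtain y where "y \<in> Y" using assms(1) shift_space_nonempty by blast
  have "\<exists>b. b # window x 0 k \<in> lang Y" for k
  proof -
    obtain v where "[y 0] @ v @ window x 0 k \<in> lang Y"
      using assms(2) window_in_lang[OF \<open>y \<in> Y\<close>, of 0 1] window_in_lang[OF assms(3)]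
      unfolding top_mixing_def by (metis One_nat_def le_refl window_Suc window_0)
    then have "butlast (y 0 # v) @ last (y 0 # v) # window x 0 k \<in> lang Y"
      by (metis append.assoc append_Cons append_butlast_last_id append_self_conv2 list.distinct(1))
    then show ?thesis using lang_suffix by blast
  qed
  then obtain b where b: "\<And>K. \<exists>k\<ge>K. b # window x 0 k \<in> lang Y"
    using finite_value_infinitely_often[of "\<lambda>k b. b # window x 0 k \<in> lang Y"] by blast
  have "window (case_nat b x) 0 k \<in> lang Y" for k
  proof -
    obtain k' where "k \<le> k'" "b # window x 0 k' \<in> lang Y" using b by blast
    then have "window (case_nat b x) 0 (Suc k') \<in> lang Y" by (simp add: window_case_nat)
    then show ?thesis
      using window_add[of "case_nat b x" 0 k "Suc k' - k"] \<open>k \<le> k'\<close> lang_prefix by fastforce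
  qed
  then show ?thesis using shift_space_memI[OF assms(1)] by blast
qed

lemma mixing_sofic_limit_imp_shift_onto:
  fixes X :: "(nat \<Rightarrow> 'a::finite) set"
  assumes "shift_space X" "mixing_sofic_limit X"
  shows "shift ` X = X"
proof
  show "shift ` X \<subseteq> X" using assms(1) unfolding shift_space_def by blast
  obtain Xs :: "nat \<Rightarrow> (nat \<Rightarrow> 'a) set" where Xs: "\<And>n. sofic (Xs n)" "\<And>n. top_mixing (Xs n)"
    "decseq Xs" "X = (\<Inter>n. Xs n)"
    using assms(2) unfolding mixing_sofic_limit_def by blast
  show "X \<subseteq> shift ` X"
  proof
    fix x assume "x \<in> X"
    have "\<exists>b. case_nat b x \<in> Xs n" for n
      using top_mixing_preimage[of "Xs n" x] Xs \<open>x \<in> X\<close> unfolding sofic_def by blast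
    then obtain b where b: "\<And>K. \<exists>k\<ge>K. case_nat b x \<in> Xs k"
      using finite_value_infinitely_often[of "\<lambda>n b. case_nat b x \<in> Xs n"] by blast
    have "case_nat b x \<in> Xs n" for n
      using b[of n] Xs(3) unfolding decseq_def by blast
    then have "case_nat b x \<in> X" using Xs(4) by blast
    moreover have "shift (case_nat b x) = x" by (simp add: shift_def)
    ultimately show "x \<in> shift ` X" by (metis image_eqI)
  qed
qed

section \<open>Mixing sofic shifts have a uniform gap\<close>

definition labelled_path :: "(nat \<times> 'a \<times> nat) set \<Rightarrow> (nat \<Rightarrow> nat) \<Rightarrow> (nat \<Rightarrow> 'a) \<Rightarrow> bool" where
  "labelled_path E p x \<longleftrightarrow> (\<forall>i. (p i, x i, p (Suc i)) \<in> E)"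

lemma labelled_path_glue:
  assumes "labelled_path E p x" "labelled_path E p' x'" "p a = p' b"
  shows "labelled_path E (glue p a p' b) (glue x a x' b)"
  unfolding labelled_path_def
proof
  fix i
  consider "Suc i < a" | "Suc i = a" | "a \<le> i" by linarith
  then show "(glue p a p' b i, glue x a x' b i, glue p a p' b (Suc i)) \<in> E"
  proof cases
    case 2
    then have "glue p a p' b (Suc i) = p (Suc i)" "glue p a p' b i = p i" "glue x a x' b i = x i"
      using assms(3) by (simp_all add: glue_def)
    moreover have "(p i, x i, p (Suc i)) \<in> E" using assms(1) by (simp add: labelled_path_def)
    ultimately show ?thesis by simp
  next
    case 3
    then have "Suc i - a + b = Suc (i - a + b)" by simp
    then show ?thesis using assms(2) 3 by (simp add: labelled_path_def glue_def)
  qed (use assms(1) in \<open>simp add: labelled_path_def\<close>)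
qed

lemma labelled_path_suffix: "labelled_path E p x \<Longrightarrow> labelled_path E (\<lambda>k. p (c + k)) (\<lambda>k. x (c + k))"
  by (simp add: labelled_path_def)

definition exit_vertices :: "(nat \<times> 'a \<times> nat) set \<Rightarrow> 'a list \<Rightarrow> nat set" where
  "exit_vertices E u =
    {p (i + length u) | p x i. labelled_path E p x \<and> window x i (length u) = u}"

definition entry_vertices :: "(nat \<times> 'a \<times> nat) set \<Rightarrow> 'a list \<Rightarrow> nat set" where
  "entry_vertices E w = {p 0 | p x. labelled_path E p x \<and> window x 0 (length w) = w}"

lemma exit_vertices_subset: "exit_vertices E u \<subseteq> fst ` E"
  unfolding exit_vertices_def labelled_path_def by (force intro: rev_image_eqI)

lemma entry_vertices_subset: "entry_vertices E w \<subseteq> fst ` E"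
  unfolding entry_vertices_def labelled_path_def by (force intro: rev_image_eqI)

lemma window_append_iff:
  "window x i (length u + length v) = u @ v \<longleftrightarrow>
    window x i (length u) = u \<and> window x (i + length u) (length v) = v"
  by (simp add: window_add append_eq_append_conv)

lemma lang_replace_prefix:
  assumes Y: "Y = {x. \<exists>p. labelled_path E p x}"
    and "u0 @ s \<in> lang Y" "exit_vertices E u0 \<subseteq> exit_vertices E u"
  shows "u @ s \<in> lang Y"
proof -
  obtain x p i where x: "labelled_path E p x" "window x i (length u0) = u0"
    "window x (i + length u0) (length s) = s"
    using assms(2) unfolding Y lang_iff_window by (auto simp: window_append_iff)
  then have "p (i + length u0) \<in> exit_vertices E u"
    using assms(3) unfolding exit_vertices_def by blast
  then obtain x' p' i' where x': "labelled_path E p' x'" "window x' i' (length u) = u"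
    "p' (i' + length u) = p (i + length u0)"
    unfolding exit_vertices_def by (smt (verit) mem_Collect_eq)
  let ?y = "glue x' (i' + length u) x (i + length u0)"
  have "?y \<in> Y" using labelled_path_glue[OF x'(1) x(1) x'(3)] Y by blast
  moreover have "window ?y i' (length u + length s) = u @ s"
    using x(3) x'(2) by (simp add: window_append_iff window_glue_left window_glue_right[of _ _ _ _ 0, simplified])
  ultimately show ?thesis unfolding lang_iff_window by (metis length_append)
qed

lemma lang_replace_suffix:
  assumes Y: "Y = {x. \<exists>p. labelled_path E p x}"
    and "s @ w0 \<in> lang Y" "entry_vertices E w0 \<subseteq> entry_vertices E w"
  shows "s @ w \<in> lang Y"
proof -
  obtain x p i where x: "labelled_path E p x" "window x i (length s) = s"
    "window x (i + length s) (length w0) = w0"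
    using assms(2) unfolding Y lang_iff_window by (auto simp: window_append_iff)
  have "p (i + length s) \<in> entry_vertices E w0"
    unfolding entry_vertices_def using labelled_path_suffix[OF x(1)] x(3)
    by (intro CollectI exI[of _ "\<lambda>k. p (i + length s + k)"] exI[of _ "\<lambda>k. x (i + length s + k)"])
      (simp add: window_shifted)
  then have "p (i + length s) \<in> entry_vertices E w" using assms(3) by blast
  then obtain x' p' where x': "labelled_path E p' x'" "window x' 0 (length w) = w"
    "p' 0 = p (i + length s)"
    unfolding entry_vertices_def by (smt (verit) mem_Collect_eq)
  let ?y = "glue x (i + length s) x' 0"
  have "?y \<in> Y" using labelled_path_glue[OF x(1) x'(1)] x'(3) Y by force
  moreover have "window ?y i (length s + length w) = s @ w"
    using x(2) x'(2) by (simp add: window_append_iff window_glue_left window_glue_right[of _ _ _ _ 0, simplified])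
  ultimately show ?thesis unfolding lang_iff_window by (metis length_append)
qed

lemma lang_replace_ends:
  assumes Y: "Y = {x. \<exists>p. labelled_path E p x}" and "u0 @ v @ w0 \<in> lang Y"
    and "exit_vertices E u0 = exit_vertices E u" "entry_vertices E w0 = entry_vertices E w"
  shows "u @ v @ w \<in> lang Y"
proof -
  have "(u @ v) @ w0 \<in> lang Y" using lang_replace_prefix[OF Y assms(2)] assms(3) by simp
  then have "(u @ v) @ w \<in> lang Y" using lang_replace_suffix[OF Y] assms(4) by blast
  then show ?thesis by simp
qed

definition mixing_gap :: "(nat \<Rightarrow> 'a) set \<Rightarrow> nat \<Rightarrow> bool" where
  "mixing_gap Y M \<longleftrightarrow> (\<forall>u\<in>lang Y. \<forall>w\<in>lang Y. \<forall>m\<ge>M. \<exists>v. length v = m \<and> u @ v @ w \<in> lang Y)"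

lemma sofic_top_mixing_gap:
  assumes "sofic Y" "top_mixing Y"
  shows "\<exists>M. mixing_gap Y M"
proof -
  obtain E where "finite E" and Y: "Y = {x. \<exists>p. labelled_path E p x}"
    using assms(1) unfolding sofic_def labelled_path_def by blast
  define cls where "cls u w = (exit_vertices E u, entry_vertices E w)" for u w
  define K where "K = case_prod cls ` (lang Y \<times> lang Y)"
  have "K \<subseteq> Pow (fst ` E) \<times> Pow (fst ` E)"
    unfolding K_def cls_def using exit_vertices_subset entry_vertices_subset by fastforce
  then have "finite K" using \<open>finite E\<close> by (auto intro: finite_subset)
  have "\<exists>N. \<forall>m\<ge>N. \<forall>u\<in>lang Y. \<forall>w\<in>lang Y. cls u w = k \<longrightarrow> (\<exists>v. length v = m \<and> u @ v @ w \<in> lang Y)"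
    if "k \<in> K" for k
  proof -
    obtain u0 w0 where uw0: "u0 \<in> lang Y" "w0 \<in> lang Y" "cls u0 w0 = k"
      using \<open>k \<in> K\<close> unfolding K_def by auto
    obtain N where N: "\<And>m. N \<le> m \<Longrightarrow> \<exists>v. length v = m \<and> u0 @ v @ w0 \<in> lang Y"
      using assms(2) uw0(1,2) unfolding top_mixing_def by blast
    have "\<exists>v. length v = m \<and> u @ v @ w \<in> lang Y" if "N \<le> m" "cls u w = k" for m u w
    proof -
      obtain v where v: "length v = m" "u0 @ v @ w0 \<in> lang Y" using N \<open>N \<le> m\<close> by blast
      have "exit_vertices E u0 = exit_vertices E u" "entry_vertices E w0 = entry_vertices E w"
        using uw0(3) \<open>cls u w = k\<close> by (auto simp: cls_def)
      then show ?thesis using lang_replace_ends[OF Y v(2)] v(1) by blast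
    qed
    then show ?thesis by blast
  qed
  then obtain N where N: "\<And>k m u w. k \<in> K \<Longrightarrow> N k \<le> m \<Longrightarrow> u \<in> lang Y \<Longrightarrow> w \<in> lang Y \<Longrightarrow>
      cls u w = k \<Longrightarrow> \<exists>v. length v = m \<and> u @ v @ w \<in> lang Y"
    by metis
  have "mixing_gap Y (Max (N ` K))"
    unfolding mixing_gap_def
  proof (intro ballI allI impI)
    fix u w m assume "u \<in> lang Y" "w \<in> lang Y" "Max (N ` K) \<le> m"
    moreover have "cls u w \<in> K" using \<open>u \<in> lang Y\<close> \<open>w \<in> lang Y\<close> by (auto simp: K_def)
    moreover have "N (cls u w) \<le> Max (N ` K)"
      using \<open>cls u w \<in> K\<close> \<open>finite K\<close> by (simp add: Max_ge)
    ultimately show "\<exists>v. length v = m \<and> u @ v @ w \<in> lang Y"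
      using N[of "cls u w" m u w] by simp
  qed
  then show ?thesis by blast
qed

section \<open>A uniform gap gives shadowing\<close>

lemma sum_length_ge: "(\<And>k. N \<le> length (w k)) \<Longrightarrow> j * N \<le> (\<Sum>k<j. length (w k))"
  using sum_mono[of "{..<j}" "\<lambda>_. N" "\<lambda>k. length (w k)"] by simp

lemma disagreements_concat_inf_le:
  fixes v w :: "nat \<Rightarrow> 'a list"
  assumes len: "\<And>j. length (v j) = length (w j)" "\<And>j. N \<le> length (v j)" "1 \<le> N"
    and diff: "\<And>j. card {r. r < length (v j) \<and> v j ! r \<noteq> w j ! r} \<le> M"
  shows "disagreements (concat_inf v) (concat_inf w) T \<le> (T div N + 1) * M"
proof -
  define S where "S j = (\<Sum>k<j. length (v k))" for j
  define D where "D j = {r. r < length (v j) \<and> v j ! r \<noteq> w j ! r}" for j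
  have sub: "{i. i < T \<and> concat_inf v i \<noteq> concat_inf w i} \<subseteq> (\<Union>j<T div N + 1. (\<lambda>r. S j + r) ` D j)"
  proof
    fix i assume i: "i \<in> {i. i < T \<and> concat_inf v i \<noteq> concat_inf w i}"
    obtain j r where "r < length (v j)" "i = S j + r"
      using concat_inf_block_decomp[of v i] len(2,3) unfolding S_def by (meson le_trans)
    moreover have "S j = (\<Sum>k<j. length (w k))" unfolding S_def using len(1) by simp
    ultimately have "r \<in> D j"
      using i concat_inf_block[of r v j] concat_inf_block[of r w j] len(1) by (auto simp: D_def S_def)
    moreover have "j \<le> T div N"
    proof -
      have "j * N < T" using sum_length_ge[of N v j] len(2) i \<open>i = S j + r\<close> by (simp add: S_def)
      then show ?thesis using div_le_mono[of "j * N" T N] len(3) by simp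
    qed
    ultimately show "i \<in> (\<Union>j<T div N + 1. (\<lambda>r. S j + r) ` D j)"
      using \<open>i = S j + r\<close> by auto
  qed
  have "disagreements (concat_inf v) (concat_inf w) T \<le> (\<Sum>j<T div N + 1. card ((\<lambda>r. S j + r) ` D j))"
    unfolding disagreements_def
    by (rule order.trans[OF card_mono[OF _ sub] card_UN_le]) (auto simp: D_def)
  also have "\<dots> \<le> (\<Sum>j<T div N + 1. M)"
    by (rule sum_mono) (use diff in \<open>simp add: D_def card_image inj_on_def\<close>)
  finally show ?thesis by simp
qed

lemma dbar_concat_inf_le:
  fixes v w :: "nat \<Rightarrow> 'a list"
  assumes "\<And>j. length (v j) = length (w j)" "\<And>j. N \<le> length (v j)" "1 \<le> N"
    and "\<And>j. card {r. r < length (v j) \<and> v j ! r \<noteq> w j ! r} \<le> M"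
  shows "dbar (concat_inf v) (concat_inf w) \<le> 2 * real M / real N"
proof (rule dbar_le_if_eventually)
  show "\<forall>\<^sub>F T in sequentially. real (disagreements (concat_inf v) (concat_inf w) T) / real T
      \<le> 2 * real M / real N"
    unfolding eventually_sequentially
  proof (intro exI allI impI)
    fix T assume "N \<le> T"
    have "real (disagreements (concat_inf v) (concat_inf w) T) \<le> real ((T div N + 1) * M)"
      using disagreements_concat_inf_le[OF assms, where T = T] by (rule of_nat_mono)
    also have "\<dots> = (real (T div N) + 1) * real M" by (simp add: algebra_simps)
    also have "\<dots> \<le> (real T / real N + 1) * real M"
      by (intro mult_right_mono) (simp_all add: of_nat_div_le_of_nat)
    finally have "real (disagreements (concat_inf v) (concat_inf w) T) / real T
        \<le> real M / real N + real M / real T"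
      using \<open>N \<le> T\<close> assms(3) by (simp add: divide_simps algebra_simps)
    also have "real M / real T \<le> real M / real N"
      using \<open>N \<le> T\<close> assms(3) by (simp add: frac_le)
    finally show "real (disagreements (concat_inf v) (concat_inf w) T) / real T \<le> 2 * real M / real N"
      by simp
  qed
qed

text \<open>Keep all but the last M letters of each word and refill them with connecting words of length M,
  chosen one after the other so that every finite concatenation stays in the language.\<close>

lemma mixing_gap_refill:
  assumes gap: "mixing_gap Y M" and w: "\<And>j. w j \<in> lang Y" "\<And>j. M \<le> length (w j)"
  shows "\<exists>v. \<forall>j. length (v j) = length (w j) \<and>
    take (length (w j) - M) (v j) = take (length (w j) - M) (w j) \<and> concat (map v [0..<j]) \<in> lang Y"
proof -
  define b where "b j = take (length (w j) - M) (w j)" for j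
  have b: "b j \<in> lang Y" for j
    using w(1)[of j] lang_prefix[of "b j" "drop (length (w j) - M) (w j)"] by (simp add: b_def)
  define g where "g u u' = (SOME g. length g = M \<and> u @ g @ u' \<in> lang Y)" for u u'
  have g: "length (g u u') = M \<and> u @ g u u' @ u' \<in> lang Y" if "u \<in> lang Y" "u' \<in> lang Y" for u u'
    unfolding g_def by (rule someI_ex) (use gap that in \<open>auto simp: mixing_gap_def\<close>)
  define P where "P = rec_nat (b 0) (\<lambda>j Pj. Pj @ g Pj (b (Suc j)) @ b (Suc j))"
  have P_Suc: "P (Suc j) = P j @ g (P j) (b (Suc j)) @ b (Suc j)" for j
    by (simp add: P_def)
  have P: "P j \<in> lang Y" for j
    by (induction j) (simp_all add: P_def[symmetric] P_Suc g b, simp add: P_def b)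
  define v where "v j = b j @ g (P j) (b (Suc j))" for j
  have "concat (map v [0..<j]) @ b j = P j" for j
    by (induction j) (simp_all add: P_Suc v_def, simp add: P_def)
  then have "concat (map v [0..<j]) \<in> lang Y" for j
    using P lang_prefix by metis
  moreover have "length (v j) = length (w j)" "take (length (w j) - M) (v j) = b j" for j
    using g[OF P b] w(2)[of j] by (simp_all add: v_def b_def)
  ultimately show ?thesis by (auto simp: b_def)
qed

lemma concat_inf_mem:
  assumes "shift_space Y" "\<And>j. 1 \<le> length (v j)" "\<And>j. concat (map v [0..<j]) \<in> lang Y"
  shows "concat_inf v \<in> Y"
proof (rule shift_space_memI[OF assms(1)])
  fix k
  have "k \<le> (\<Sum>j<k. length (v j))" using sum_length_ge[of 1 v k] assms(2) by simp
  then have "window (concat_inf v) 0 (\<Sum>j<k. length (v j))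
      = window (concat_inf v) 0 k @ window (concat_inf v) k ((\<Sum>j<k. length (v j)) - k)"
    using window_add[of "concat_inf v" 0 k "(\<Sum>j<k. length (v j)) - k"] by simp
  then show "window (concat_inf v) 0 k \<in> lang Y"
    using assms(3)[of k] window_concat_inf[of v k] lang_prefix by metis
qed

lemma mixing_gap_shadowing:
  assumes "shift_space Y" "mixing_gap Y M" "M < N"
    and w: "\<And>j. w j \<in> lang Y" "\<And>j. N \<le> length (w j)"
  shows "\<exists>y\<in>Y. dbar (concat_inf w) y \<le> 2 * real M / real N"
proof -
  have "M \<le> length (w j)" for j using w(2)[of j] assms(3) by simp
  then obtain v where v: "\<And>j. length (v j) = length (w j)"
    "\<And>j. take (length (w j) - M) (v j) = take (length (w j) - M) (w j)"
    "\<And>j. concat (map v [0..<j]) \<in> lang Y"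
    using mixing_gap_refill[OF assms(2), of w] w(1) by blast
  have "concat_inf v \<in> Y"
    using concat_inf_mem[OF assms(1) _ v(3)] v(1) w(2) assms(3) by (metis le_trans less_imp_le_nat less_one not_le)
  moreover have "card {r. r < length (w j) \<and> w j ! r \<noteq> v j ! r} \<le> M" for j
  proof -
    have "w j ! r = v j ! r" if "r < length (w j) - M" for r
      using arg_cong[OF v(2)[of j], of "\<lambda>l. l ! r"] that v(1)[of j] by simp
    then have "{r. r < length (w j) \<and> w j ! r \<noteq> v j ! r} \<subseteq> {length (w j) - M..<length (w j)}"
      by (auto simp flip: not_less)
    then have "card {r. r < length (w j) \<and> w j ! r \<noteq> v j ! r} \<le> card {length (w j) - M..<length (w j)}"
      by (rule card_mono[rotated]) simp
    then show ?thesis by simp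
  qed
  then have "dbar (concat_inf w) (concat_inf v) \<le> 2 * real M / real N"
    using dbar_concat_inf_le[of w v N M] v(1) w(2) assms(3) by simp
  ultimately show ?thesis by blast
qed

lemma mixing_sofic_limit_imp_shadowing:
  assumes "shift_space X" "mixing_sofic_limit X"
  shows "dbar_shadowing X"
  unfolding dbar_shadowing_def
proof (intro allI impI)
  fix e :: real assume "0 < e"
  obtain Xs where Xs: "\<forall>n. sofic (Xs n) \<and> top_mixing (Xs n)" "X = (\<Inter>n. Xs n)"
    "(\<lambda>n. dbarH X (Xs n)) \<longlonglongrightarrow> 0"
    using assms(2) unfolding mixing_sofic_limit_def by blast
  obtain n where "norm (dbarH X (Xs n) - 0) < e / 2"
    using LIMSEQ_D[OF Xs(3), of "e / 2"] \<open>0 < e\<close> by auto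
  define Y where "Y = Xs n"
  have XY: "dbarH X Y < e / 2" using \<open>norm (dbarH X (Xs n) - 0) < e / 2\<close> by (simp add: Y_def)
  have "sofic Y" "top_mixing Y" "X \<subseteq> Y" using Xs(1,2) by (auto simp: Y_def)
  then have "shift_space Y" by (simp add: sofic_def)
  obtain M where "mixing_gap Y M" using sofic_top_mixing_gap \<open>sofic Y\<close> \<open>top_mixing Y\<close> by blast
  define N where "N = M + 1 + nat \<lceil>4 * real M / e\<rceil>"
  have "M < N" "1 \<le> N" by (simp_all add: N_def)
  have "4 * real M / e < real N" unfolding N_def by linarith
  then have "2 * real M / real N < e / 2"
    using \<open>0 < e\<close> \<open>1 \<le> N\<close> by (simp add: field_simps)
  have "\<exists>x'\<in>X. dbar (concat_inf w) x' < e" if w: "\<forall>j. w j \<in> lang X \<and> N \<le> length (w j)" for w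
  proof -
    obtain y where "y \<in> Y" and y: "dbar (concat_inf w) y \<le> 2 * real M / real N"
      using mixing_gap_shadowing[OF \<open>shift_space Y\<close> \<open>mixing_gap Y M\<close> \<open>M < N\<close>, of w]
        w lang_mono[OF \<open>X \<subseteq> Y\<close>] by blast
    obtain x where "x \<in> X" "dbar x y < e / 2"
      using dbarH_less_imp[OF _ \<open>y \<in> Y\<close> XY] assms(1) shift_space_nonempty by blast
    then have "dbar (concat_inf w) x < e"
      using dbar_triangle[of "concat_inf w" x y] dbar_commute[of x y] y
        \<open>2 * real M / real N < e / 2\<close> by linarith
    with \<open>x \<in> X\<close> show ?thesis by blast
  qed
  with \<open>1 \<le> N\<close> show "\<exists>N\<ge>1. \<forall>w. (\<forall>j. w j \<in> lang X \<and> N \<le> length (w j)) \<longrightarrow>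
      (\<exists>x'\<in>X. dbar (concat_inf w) x' < e)" by blast
qed

theorem mainTheorem3:
  fixes X :: "(nat \<Rightarrow> 'a::finite) set"
  assumes "shift_space X"
  shows "((\<exists>Xs :: nat \<Rightarrow> (nat \<Rightarrow> 'a) set.
             (\<forall>n. sofic (Xs n) \<and> top_mixing (Xs n)) \<and> decseq Xs \<and>
             X = (\<Inter>n. Xs n) \<and> (\<lambda>n. dbarH X (Xs n)) \<longlonglongrightarrow> 0)
          \<longleftrightarrow> (shift ` X = X \<and> dbar_shadowing X))
       \<and> ((shift ` X = X \<and> dbar_shadowing X)
          \<longleftrightarrow> (chain_mixing X \<and> dbar_approachable X))"
proof -
  have "mixing_sofic_limit X \<Longrightarrow> shift ` X = X \<and> dbar_shadowing X"
    using mixing_sofic_limit_imp_shift_onto mixing_sofic_limit_imp_shadowing assms by blast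
  moreover have "shift ` X = X \<and> dbar_shadowing X \<Longrightarrow> chain_mixing X \<and> dbar_approachable X"
    using shadowing_imp_chain_mixing shadowing_imp_approachable assms by blast
  moreover have "chain_mixing X \<and> dbar_approachable X \<Longrightarrow> mixing_sofic_limit X"
    using chain_mixing_approachable_imp_mixing_sofic_limit assms by blast
  ultimately show ?thesis unfolding mixing_sofic_limit_def[symmetric] by blast
qed

end
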